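(* Let $\mathcal{X},\mathcal{Y}$ be finite alphabets, let $W=W_{Y|X}$ be a channel from $\mathcal{X}$ to $\mathcal{Y}$, and for $P_0,P_1\in\Delta(\mathcal{X})$ let $Q_i(y)=\sum_x P_i(x)W(y|x)$. Then the SDPI coefficient $$\eta^J_\infty(W)=\sup_{P_0,P_1\in\Delta(\mathcal{X})}\frac{D^J_\infty(Q_0,Q_1)}{D^J_\infty(P_0,P_1)}$$ is achieved by binary input distributions, i.e., the supremum is unchanged when restricted to pairs $(P_0,P_1)$ supported on a common set of at most two elements of $\mathcal{X}$.
   Context: $\Delta(\mathcal{X})$ is the probability simplex on $\mathcal{X}$. $D_\infty(P\|Q)=\log\max_x\frac{P(x)}{Q(x)}$, and the Jeffreys–Rényi divergence of order infinity is $D^J_\infty(P,Q)=D_\infty(P\|Q)+D_\infty(Q\|P)$. *)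

theory Defs
  imports Complex_Main "HOL-Library.Extended_Real"
begin

definition pdist :: "('a::finite \<Rightarrow> real) \<Rightarrow> bool" where
  "pdist P \<longleftrightarrow> (\<forall>x. 0 \<le> P x) \<and> (\<Sum>x\<in>UNIV. P x) = 1"

text \<open>A channel W from 'x to 'y: W x y is the transition probability W(y|x).\<close>
definition channel :: "('x::finite \<Rightarrow> 'y::finite \<Rightarrow> real) \<Rightarrow> bool" where
  "channel W \<longleftrightarrow> (\<forall>x. pdist (W x))"

definition outdist :: "('x::finite \<Rightarrow> real) \<Rightarrow> ('x \<Rightarrow> 'y \<Rightarrow> real) \<Rightarrow> 'y \<Rightarrow> real" where
  "outdist P W y = (\<Sum>x\<in>UNIV. P x * W x y)"

definition Dinf :: "('a::finite \<Rightarrow> real) \<Rightarrow> ('a \<Rightarrow> real) \<Rightarrow> ereal" where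
  "Dinf P Q = (if \<exists>x. 0 < P x \<and> Q x = 0 then \<infinity>
               else ereal (ln (Max {P x / Q x | x. 0 < P x})))"

definition DJinf :: "('a::finite \<Rightarrow> real) \<Rightarrow> ('a \<Rightarrow> real) \<Rightarrow> ereal" where
  "DJinf P Q = Dinf P Q + Dinf Q P"

definition eta_J_on :: "(('x::finite \<Rightarrow> real) \<Rightarrow> ('x \<Rightarrow> real) \<Rightarrow> bool)
     \<Rightarrow> ('x \<Rightarrow> 'y::finite \<Rightarrow> real) \<Rightarrow> ereal" where
  "eta_J_on S W = Sup {DJinf (outdist P0 W) (outdist P1 W) / DJinf P0 P1 | P0 P1.
      S P0 P1 \<and> pdist P0 \<and> pdist P1 \<and> 0 < DJinf P0 P1 \<and> DJinf P0 P1 < \<infinity>}"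

definition eta_J :: "('x::finite \<Rightarrow> 'y::finite \<Rightarrow> real) \<Rightarrow> ereal" where
  "eta_J W = eta_J_on (\<lambda>_ _. True) W"

definition binary_support :: "('x \<Rightarrow> real) \<Rightarrow> ('x \<Rightarrow> real) \<Rightarrow> bool" where
  "binary_support P0 P1 \<longleftrightarrow> (\<exists>a b. {x. P0 x \<noteq> 0} \<subseteq> {a, b} \<and> {x. P1 x \<noteq> 0} \<subseteq> {a, b})"

end

theory Submission
  imports Defs
begin

(* Let D^J_inf(P0, P1) = ln l be finite and positive, and let M0, M1 be the largest likelihood
   ratios P0/P1 and P1/P0, so that l = M0 M1. Then P1 = f + g and M1 P0 = l f + g with f, g >= 0,
   and by linearity the outputs are proportional to l a + b and a + b, where a = f W and b = g W.
   As D^J_inf ignores rescaling, D^J_inf(Q0, Q1) is the log of max_y / min_y of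
   (l a(y) + b(y)) / (a(y) + b(y)), an increasing function of a(y) / b(y).
   The pair with weights (l r, 1) and (r, 1) on two points x1, x2 has divergence ln l, and its
   outputs have the same shape with a = r W(x1, .) and b = W(x2, .). Expanding
   a(y1) b(y2) - a(y2) b(y1) over pairs (x, x') in supp f x supp g, a mediant argument yields
   x1, x2 whose cross ratio at the extremal outputs y1, y2 dominates that of (a, b); a second
   mediant then fixes r so that both extremal ratios move outwards. *)

lemma Dinf_neq_minf: "Dinf P Q \<noteq> -\<infinity>"
  unfolding Dinf_def by simp

lemma Dinf_eq_infinity_iff: "Dinf P Q = \<infinity> \<longleftrightarrow> (\<exists>x. 0 < P x \<and> Q x = 0)"
  unfolding Dinf_def by simp

lemma Dinf_ge:
  assumes "0 < P y" "0 < Q y"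
  shows "ereal (ln (P y / Q y)) \<le> Dinf P Q"
proof (cases "\<exists>x. 0 < P x \<and> Q x = 0")
  case False
  have "P y / Q y \<le> Max {P x / Q x | x. 0 < P x}"
    using assms(1) by (intro Max_ge) auto
  moreover have "0 < P y / Q y"
    using assms by simp
  ultimately show ?thesis
    using False unfolding Dinf_def by simp
qed (simp add: Dinf_def)

lemma Dinf_attained:
  assumes supp: "\<And>x. 0 < P x \<Longrightarrow> 0 < Q x" and "0 < P z"
  obtains y where "0 < P y" "0 < Q y" "Dinf P Q = ereal (ln (P y / Q y))"
    "\<And>x. 0 < P x \<Longrightarrow> P x / Q x \<le> P y / Q y"
proof -
  let ?R = "{P x / Q x | x. 0 < P x}"
  have fin: "finite ?R"
    by simp
  have "?R \<noteq> {}"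
    using assms(2) by blast
  with fin have "Max ?R \<in> ?R"
    by (rule Max_in)
  then obtain y where y: "0 < P y" "Max ?R = P y / Q y"
    by blast
  have le: "P x / Q x \<le> P y / Q y" if "0 < P x" for x
    unfolding y(2)[symmetric] using fin that by (intro Max_ge) blast+
  have "\<not> (\<exists>x. 0 < P x \<and> Q x = 0)"
    using supp by (metis less_irrefl)
  then have "Dinf P Q = ereal (ln (P y / Q y))"
    unfolding Dinf_def y(2) by simp
  from y(1) supp[OF y(1)] this le show thesis
    by (rule that)
qed

lemma Dinf_finite_bound:
  assumes "\<And>x. 0 \<le> Q x" "0 < P z" "Dinf P Q \<noteq> \<infinity>"
  obtains M where "0 < M" "Dinf P Q = ereal (ln M)" "\<And>x. P x \<le> M * Q x"
proof -
  have supp: "0 < Q x" if "0 < P x" for x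
    using assms(1,3) that unfolding Dinf_eq_infinity_iff by (metis less_eq_real_def)
  obtain y where y: "0 < P y" "0 < Q y" "Dinf P Q = ereal (ln (P y / Q y))"
    "\<And>x. 0 < P x \<Longrightarrow> P x / Q x \<le> P y / Q y"
    using Dinf_attained[of P Q z] supp assms(2) by blast
  have "P x \<le> P y / Q y * Q x" for x
  proof (cases "0 < P x")
    case True
    then show ?thesis using y(4)[OF True] supp[OF True] by (simp add: divide_le_eq)
  next
    case False
    have "0 \<le> P y / Q y * Q x"
      using y(1,2) assms(1)[of x] by simp
    then show ?thesis using False by linarith
  qed
  with y show thesis
    by (intro that[of "P y / Q y"]) auto
qed

lemma Dinf_scale:
  assumes "0 < c" "0 < d" "\<And>x. 0 \<le> Q x" "0 < P z"
  shows "Dinf (\<lambda>x. c * P x) (\<lambda>x. d * Q x) = Dinf P Q + ereal (ln c - ln d)"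
proof (cases "\<exists>x. 0 < P x \<and> Q x = 0")
  case False
  let ?R = "{P x / Q x | x. 0 < P x}"
  have fin: "finite ?R" "?R \<noteq> {}"
    using assms(4) by auto
  have "0 < P z / Q z"
    using False assms(3)[of z] assms(4) by (simp add: less_eq_real_def)
  moreover have "P z / Q z \<le> Max ?R"
    using fin(1) assms(4) by (intro Max_ge) auto
  ultimately have pos: "0 < Max ?R"
    by linarith
  have "\<And>x. 0 < c * P x \<longleftrightarrow> 0 < P x"
    using assms(1) by (simp add: zero_less_mult_iff)
  then have "{c * P x / (d * Q x) | x. 0 < c * P x} = {c / d * (P x / Q x) | x. 0 < P x}"
    by simp
  also have "\<dots> = (\<lambda>t. c / d * t) ` ?R"
    by blast
  finally have R: "{c * P x / (d * Q x) | x. 0 < c * P x} = (\<lambda>t. c / d * t) ` ?R" .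
  have "mono (\<lambda>t. c / d * t)"
    using assms(1,2) by (intro monoI mult_left_mono) simp_all
  then have "c / d * Max ?R = Max ((\<lambda>t. c / d * t) ` ?R)"
    using fin by (rule mono_Max_commute)
  moreover have "ln (c / d * Max ?R) = ln (Max ?R) + (ln c - ln d)"
    using pos assms(1,2) by (simp add: ln_mult ln_div)
  ultimately show ?thesis
    using False assms(1,2) unfolding Dinf_def R by (simp add: zero_less_mult_iff)
next
  case True
  then obtain x where "0 < P x" "Q x = 0"
    by blast
  then have "0 < c * P x" "d * Q x = 0"
    using assms(1) by simp_all
  with True show ?thesis
    unfolding Dinf_def by auto
qed

lemma DJinf_scale:
  assumes "0 < c" "0 < d" "\<And>x. 0 \<le> P x" "\<And>x. 0 \<le> Q x" "0 < P z" "0 < Q z'"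
  shows "DJinf (\<lambda>x. c * P x) (\<lambda>x. d * Q x) = DJinf P Q"
proof -
  have "DJinf (\<lambda>x. c * P x) (\<lambda>x. d * Q x)
      = Dinf P Q + ereal (ln c - ln d) + (Dinf Q P + ereal (ln d - ln c))"
    unfolding DJinf_def using assms by (simp add: Dinf_scale)
  also have "\<dots> = DJinf P Q"
    unfolding DJinf_def by (simp add: ac_simps)
  finally show ?thesis .
qed

lemma DJinf_ge:
  assumes "0 < P y1" "0 < Q y1" "0 < P y2" "0 < Q y2"
  shows "ereal (ln ((P y1 / Q y1) / (P y2 / Q y2))) \<le> DJinf P Q"
proof -
  have "ln ((P y1 / Q y1) / (P y2 / Q y2)) = ln (P y1 / Q y1) + ln (Q y2 / P y2)"
    using assms by (simp add: ln_div ln_mult)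
  then show ?thesis
    unfolding DJinf_def using add_mono[OF Dinf_ge[of P y1 Q] Dinf_ge[of Q y2 P]] assms by simp
qed

lemma DJinf_attained:
  assumes supp: "\<And>x. 0 < P x \<longleftrightarrow> 0 < Q x" and "0 < P z"
  obtains y1 y2 where "0 < P y1" "0 < Q y1" "0 < P y2" "0 < Q y2"
    "DJinf P Q = ereal (ln ((P y1 / Q y1) / (P y2 / Q y2)))"
proof -
  have PQ: "\<And>x. 0 < P x \<Longrightarrow> 0 < Q x" and QP: "\<And>x. 0 < Q x \<Longrightarrow> 0 < P x"
    using supp by simp_all
  obtain y1 where y1: "0 < P y1" "0 < Q y1" "Dinf P Q = ereal (ln (P y1 / Q y1))"
    using Dinf_attained[of P Q z, OF PQ assms(2)] by blast
  obtain y2 where y2: "0 < Q y2" "0 < P y2" "Dinf Q P = ereal (ln (Q y2 / P y2))"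
    using Dinf_attained[of Q P z, OF QP PQ[OF assms(2)]] by blast
  have "DJinf P Q = ereal (ln ((P y1 / Q y1) / (P y2 / Q y2)))"
    unfolding DJinf_def y1(3) y2(3) using y1 y2 by (simp add: ln_div ln_mult)
  with y1 y2 show thesis
    by (intro that) auto
qed

lemma DJinf_nonneg:
  assumes "0 < P y" "0 < Q y"
  shows "0 \<le> DJinf P Q"
  using DJinf_ge[of P y Q y] assms by (simp add: zero_ereal_def)

lemma DJinf_ge_ratio_bounds:
  assumes "0 < P y1" "0 < Q y1" "0 < P y2" "0 < Q y2" "0 < s1" "0 < s2"
    and "s1 \<le> P y1 / Q y1" "P y2 / Q y2 \<le> s2"
  shows "ereal (ln (s1 / s2)) \<le> DJinf P Q"
proof -
  have "s1 / s2 \<le> (P y1 / Q y1) / (P y2 / Q y2)"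
    using assms by (meson frac_le divide_pos_pos less_imp_le)
  then have "ln (s1 / s2) \<le> ln ((P y1 / Q y1) / (P y2 / Q y2))"
    using assms by (subst ln_le_cancel_iff) simp_all
  then have "ereal (ln (s1 / s2)) \<le> ereal (ln ((P y1 / Q y1) / (P y2 / Q y2)))"
    by simp
  also have "\<dots> \<le> DJinf P Q"
    using assms(1-4) by (rule DJinf_ge)
  finally show ?thesis .
qed

lemma DJinf_self:
  assumes "0 < P z"
  shows "DJinf P P = 0"
proof -
  have "{P x / P x | x. 0 < P x} = {1}"
    using assms by (auto intro!: exI[of _ z])
  moreover have "\<not> (\<exists>x. 0 < P x \<and> P x = 0)"
    by auto
  ultimately show ?thesis
    unfolding DJinf_def Dinf_def by simp
qed

lemma pdist_ex_pos:
  assumes "pdist P"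
  obtains x where "0 < P x"
proof (rule ccontr)
  assume "\<not> thesis"
  then have "P x \<le> 0" for x
    using that by (meson not_le)
  then have "P x = 0" for x
    using assms unfolding pdist_def by (meson antisym)
  then show False
    using assms unfolding pdist_def by simp
qed

lemma outdist_nonneg:
  assumes "\<And>x y. 0 \<le> W x y" "\<And>x. 0 \<le> P x"
  shows "0 \<le> outdist P W y"
  unfolding outdist_def using assms by (simp add: sum_nonneg)

lemma pdist_outdist:
  assumes "channel W" "pdist P"
  shows "pdist (outdist P W)"
proof -
  have W: "\<And>x y. 0 \<le> W x y" "\<And>x. (\<Sum>y\<in>UNIV. W x y) = 1"
    using assms(1) unfolding channel_def pdist_def by simp_all
  have "(\<Sum>y\<in>UNIV. outdist P W y) = (\<Sum>x\<in>UNIV. \<Sum>y\<in>UNIV. P x * W x y)"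
    unfolding outdist_def by (rule sum.swap)
  also have "\<dots> = (\<Sum>x\<in>UNIV. P x)"
    by (simp add: W(2) flip: sum_distrib_left)
  finally show ?thesis
    using assms(2) W(1) outdist_nonneg unfolding pdist_def by metis
qed

lemma outdist_ge:
  assumes "\<And>x y. 0 \<le> W x y" "\<And>x. 0 \<le> P x"
  shows "P x * W x y \<le> outdist P W y"
  unfolding outdist_def using assms by (intro member_le_sum) auto

lemma channel_nonneg: "channel W \<Longrightarrow> 0 \<le> W x y"
  unfolding channel_def pdist_def by simp

lemma channel_ex_pos:
  assumes "channel W"
  obtains y where "0 < W x y"
proof -
  have "pdist (W x)"
    using assms unfolding channel_def by simp
  then show thesis
    using that by (rule pdist_ex_pos)
qed

lemma outdist_scale: "outdist (\<lambda>x. c * P x) W = (\<lambda>y. c * outdist P W y)"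
  unfolding outdist_def by (simp add: sum_distrib_left mult.assoc)

definition mixture :: "real \<Rightarrow> ('a \<Rightarrow> real) \<Rightarrow> ('a \<Rightarrow> real) \<Rightarrow> 'a \<Rightarrow> real" where
  "mixture l f g x = l * f x + g x"

lemma mixture_nonneg:
  assumes "0 \<le> l" "\<And>x. 0 \<le> f x" "\<And>x. 0 \<le> g x"
  shows "0 \<le> mixture l f g x"
  unfolding mixture_def using assms by simp

lemma outdist_mixture: "outdist (mixture l f g) W = mixture l (outdist f W) (outdist g W)"
  unfolding outdist_def mixture_def
  by (simp add: sum.distrib sum_distrib_left algebra_simps)

definition two_point :: "'a \<Rightarrow> 'a \<Rightarrow> real \<Rightarrow> 'a \<Rightarrow> real" where
  "two_point a b t x = 1 / (t + 1) * ((if x = a then t else 0) + (if x = b then 1 else 0))"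

lemma pdist_two_point:
  assumes "a \<noteq> b" "0 \<le> t"
  shows "pdist (two_point a b t)"
proof -
  have "(\<Sum>x\<in>UNIV. two_point a b t x)
      = 1 / (t + 1) * (\<Sum>x\<in>UNIV. (if x = a then t else 0) + (if x = b then 1 else 0))"
    unfolding two_point_def by (rule sum_distrib_left[symmetric])
  also have "\<dots> = 1"
    using assms by (simp add: sum.distrib)
  finally show ?thesis
    unfolding pdist_def two_point_def using assms by simp
qed

lemma binary_support_two_point: "binary_support (two_point a b s) (two_point a b t)"
  unfolding binary_support_def two_point_def by auto

lemma outdist_two_point:
  "outdist (two_point a b t) W = (\<lambda>y. 1 / (t + 1) * mixture t (W a) (W b) y)"
proof
  fix y
  have delta: "(\<Sum>x\<in>UNIV. (if x = c then s else 0) * W x y) = s * W c y" for c s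
  proof -
    have "(if x = c then s else 0) * W x y = (if x = c then s * W c y else 0)" for x
      by simp
    then show ?thesis
      by simp
  qed
  have "outdist (two_point a b t) W y
      = 1 / (t + 1) * (\<Sum>x\<in>UNIV. (if x = a then t else 0) * W x y + (if x = b then 1 else 0) * W x y)"
    unfolding outdist_def two_point_def by (simp add: sum_distrib_left distrib_right mult.assoc)
  also have "\<dots> = 1 / (t + 1) * mixture t (W a) (W b) y"
    by (simp add: sum.distrib delta mixture_def)
  finally show "outdist (two_point a b t) W y = 1 / (t + 1) * mixture t (W a) (W b) y" .
qed

lemma DJinf_two_point:
  assumes "a \<noteq> b" "0 < t" "1 \<le> l"
  shows "DJinf (two_point a b (l * t)) (two_point a b t) = ereal (ln l)"
proof -
  define P where "P x = (if x = a then l * t else 0) + (if x = b then 1 else 0)" for x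
  define Q where "Q x = (if x = a then t else 0) + (if x = b then 1 else 0)" for x
  have pos: "0 < P x \<longleftrightarrow> x = a \<or> x = b" "0 < Q x \<longleftrightarrow> x = a \<or> x = b" for x
    unfolding P_def Q_def using assms by auto
  then have fin: "\<not> (\<exists>x. 0 < P x \<and> Q x = 0)" "\<not> (\<exists>x. 0 < Q x \<and> P x = 0)"
    by (metis less_irrefl)+
  have "{P x / Q x | x. 0 < P x} = {l, 1}" "{Q x / P x | x. 0 < Q x} = {1 / l, 1}"
    unfolding pos using assms by (auto simp: P_def Q_def)
  then have "Dinf P Q = ereal (ln l)" "Dinf Q P = 0"
    unfolding Dinf_def using fin assms by (simp_all add: max_def)
  moreover have "two_point a b (l * t) = (\<lambda>x. 1 / (l * t + 1) * P x)"
    "two_point a b t = (\<lambda>x. 1 / (t + 1) * Q x)"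
    unfolding two_point_def P_def Q_def by auto
  moreover have "DJinf (\<lambda>x. 1 / (l * t + 1) * P x) (\<lambda>x. 1 / (t + 1) * Q x) = DJinf P Q"
    using assms by (intro DJinf_scale[of _ _ _ _ a a]) (auto simp: P_def Q_def add_pos_pos)
  ultimately show ?thesis
    unfolding DJinf_def by simp
qed

lemma DJinf_outdist_two_point:
  assumes "channel W" "0 < l" "0 < r"
  shows "DJinf (outdist (two_point a b (l * r)) W) (outdist (two_point a b r) W)
       = DJinf (mixture l (\<lambda>y. r * W a y) (W b)) (mixture 1 (\<lambda>y. r * W a y) (W b))"
proof -
  have W_nonneg: "0 \<le> W x y" for x y
    using assms(1) by (rule channel_nonneg)
  obtain y where "0 < W b y"
    using assms(1) by (rule channel_ex_pos)
  then have "0 < mixture (l * r) (W a) (W b) y" "0 < mixture r (W a) (W b) y"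
    unfolding mixture_def using assms W_nonneg by (auto intro: add_nonneg_pos)
  then have "DJinf (outdist (two_point a b (l * r)) W) (outdist (two_point a b r) W)
      = DJinf (mixture (l * r) (W a) (W b)) (mixture r (W a) (W b))"
    unfolding outdist_two_point using assms W_nonneg
    by (intro DJinf_scale) (auto simp: mixture_nonneg add_pos_pos)
  also have "\<dots> = DJinf (mixture l (\<lambda>y. r * W a y) (W b)) (mixture 1 (\<lambda>y. r * W a y) (W b))"
    by (simp add: mixture_def[abs_def] mult.assoc)
  finally show ?thesis .
qed

(* (l a + b) / (a + b) = 1 + (l - 1) a / (a + b) grows with a / b, and c b <= a e says c / e <= a / b. *)
lemma mixture_ratio_mono:
  fixes l a b c e :: real
  assumes "1 \<le> l" "0 \<le> a" "0 \<le> b" "0 \<le> c" "0 \<le> e" "0 < a + b" "0 < c + e"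
    and "c * b \<le> a * e"
  shows "(l * c + e) / (c + e) \<le> (l * a + b) / (a + b)"
proof -
  have "0 \<le> (l - 1) * (a * e - c * b)"
    using assms by simp
  also have "\<dots> = (l * a + b) * (c + e) - (l * c + e) * (a + b)"
    by (simp add: algebra_simps)
  finally show ?thesis
    using assms(6,7) by (simp add: divide_le_eq le_divide_eq mult.commute)
qed

lemma mixture_mono_weight:
  assumes "1 \<le> l" "0 \<le> f x"
  shows "mixture 1 f g x \<le> mixture l f g x"
  unfolding mixture_def using assms by (simp add: mult_right_mono[of 1 l, simplified])

lemma mixture_pos_iff:
  assumes "1 \<le> l" "0 \<le> f x" "0 \<le> g x"
  shows "0 < mixture l f g x \<longleftrightarrow> 0 < mixture 1 f g x"
proof
  assume "0 < mixture l f g x"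
  moreover have "mixture 1 f g x = 0 \<Longrightarrow> mixture l f g x = 0" "0 \<le> mixture 1 f g x"
    using assms unfolding mixture_def by (simp_all add: add_nonneg_eq_0_iff)
  ultimately show "0 < mixture 1 f g x"
    by (metis less_irrefl less_eq_real_def)
next
  assume "0 < mixture 1 f g x"
  then show "0 < mixture l f g x"
    using mixture_mono_weight[of l f x g, OF assms(1,2)] by (rule less_le_trans)
qed

lemma exists_ratio_ge_mediant:
  fixes F A B :: "'i::finite \<Rightarrow> real"
  assumes F: "\<And>i. 0 \<le> F i" and B: "\<And>i. 0 \<le> B i"
    and less: "(\<Sum>i\<in>UNIV. F i * B i) < (\<Sum>i\<in>UNIV. F i * A i)"
  obtains i where "0 < F i" "B i < A i"
    "B i * (\<Sum>i\<in>UNIV. F i * A i) \<le> A i * (\<Sum>i\<in>UNIV. F i * B i)"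
proof (rule ccontr)
  define S where "S = (\<Sum>i\<in>UNIV. F i * A i)"
  define T where "T = (\<Sum>i\<in>UNIV. F i * B i)"
  note found = that
  assume "\<not> thesis"
  then have strict: "A i * T < B i * S" if "0 < F i" "B i < A i" for i
    using that found[of i] unfolding S_def T_def by (meson not_le)
  have "T < S" "0 \<le> T"
    using less F B unfolding S_def T_def by (simp_all add: sum_nonneg)
  have le: "F i * (A i * T) \<le> F i * (B i * S)" for i
  proof (cases "0 < F i \<and> B i < A i")
    case True
    then show ?thesis
      using strict[of i] by simp
  next
    case False
    then consider "F i = 0" | "A i \<le> B i"
      using F[of i] by fastforce
    then show ?thesis
    proof cases
      case 2
      then have "A i * T \<le> B i * S"
        using \<open>T < S\<close> \<open>0 \<le> T\<close> B[of i] by (meson less_imp_le mult_left_mono mult_right_mono order_trans)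
      then show ?thesis
        using F[of i] by (rule mult_left_mono)
    qed simp
  qed
  obtain j where "F j * B j < F j * A j"
    using less sum_mono[of UNIV "\<lambda>i. F i * A i" "\<lambda>i. F i * B i"] by (meson not_le)
  then have "0 < F j" "B j < A j"
    using F[of j] by (auto simp: mult_less_cancel_left)
  then have "F j * (A j * T) < F j * (B j * S)"
    using strict by simp
  with le have "(\<Sum>i\<in>UNIV. F i * (A i * T)) < (\<Sum>i\<in>UNIV. F i * (B i * S))"
    by (intro sum_strict_mono_ex1) auto
  moreover have "(\<Sum>i\<in>UNIV. F i * (A i * T)) = S * T" "(\<Sum>i\<in>UNIV. F i * (B i * S)) = T * S"
    unfolding S_def T_def by (simp_all add: sum_distrib_right mult.assoc)
  ultimately show False
    by (simp add: mult.commute)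
qed

(* The witness (A + D) / (B + C) is a mediant of A / B and D / C. *)
lemma exists_scale_between:
  fixes A B C D :: real
  assumes "0 \<le> A" "0 \<le> B" "0 \<le> C" "0 \<le> D" "A * C \<le> B * D"
    and "B = 0 \<Longrightarrow> A = 0" "0 < C \<Longrightarrow> 0 < D"
  obtains r where "0 < r" "A \<le> r * B" "r * C \<le> D"
proof (cases "0 < A + D \<and> 0 < B + C")
  case True
  have "A * (B + C) \<le> (A + D) * B" "(A + D) * C \<le> D * (B + C)"
    using assms(5) by (simp_all add: algebra_simps)
  with True show thesis
    by (intro that[of "(A + D) / (B + C)"]) (simp_all add: field_simps)
next
  case False
  then have "A = 0" "C = 0"
    using assms by (smt (verit))+
  with assms show thesis
    by (intro that[of 1]) simp_all
qed

lemma sum_mult_sum_UNIV: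
  fixes u v :: "'a::finite \<Rightarrow> real"
  shows "(\<Sum>x\<in>UNIV. u x) * (\<Sum>x\<in>UNIV. v x) = (\<Sum>(x, x')\<in>UNIV. u x * v x')"
  by (simp add: sum_product sum.cartesian_product flip: UNIV_Times_UNIV)

lemma exists_pair_cross_ratio_ge:
  fixes W :: "'x::finite \<Rightarrow> 'y \<Rightarrow> real" and f g :: "'x \<Rightarrow> real"
  assumes W: "\<And>x y. 0 \<le> W x y" and f: "\<And>x. 0 \<le> f x" and g: "\<And>x. 0 \<le> g x"
    and less: "outdist f W y2 * outdist g W y1 < outdist f W y1 * outdist g W y2"
  obtains x1 x2 where "0 < f x1" "0 < g x2" "W x1 y2 * W x2 y1 < W x1 y1 * W x2 y2"
    "W x1 y2 * W x2 y1 * (outdist f W y1 * outdist g W y2)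
       \<le> W x1 y1 * W x2 y2 * (outdist f W y2 * outdist g W y1)"
proof -
  define F A B where "F = (\<lambda>(x, x'). f x * g x')"
    "A = (\<lambda>(x, x'). W x y1 * W x' y2)" "B = (\<lambda>(x, x'). W x y2 * W x' y1)"
  have sums: "(\<Sum>p\<in>UNIV. F p * A p) = outdist f W y1 * outdist g W y2"
    "(\<Sum>p\<in>UNIV. F p * B p) = outdist f W y2 * outdist g W y1"
    unfolding outdist_def sum_mult_sum_UNIV F_A_B_def by (simp_all add: split_beta mult_ac)
  have nonneg: "\<And>p. 0 \<le> F p" "\<And>p. 0 \<le> B p"
    unfolding F_A_B_def using f g W by (simp_all add: split_beta)
  obtain p where p: "0 < F p" "B p < A p"
    "B p * (outdist f W y1 * outdist g W y2) \<le> A p * (outdist f W y2 * outdist g W y1)"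
    using exists_ratio_ge_mediant[of F B A, OF nonneg] less unfolding sums by blast
  obtain x1 x2 where "p = (x1, x2)"
    by (cases p)
  with p f[of x1] g[of x2] show thesis
    unfolding F_A_B_def by (intro that) (auto simp: zero_less_mult_iff)
qed

lemma exists_two_point_ratio_bounds:
  fixes W :: "'x::finite \<Rightarrow> 'y \<Rightarrow> real" and f g :: "'x \<Rightarrow> real"
  assumes W: "\<And>x y. 0 \<le> W x y" and f: "\<And>x. 0 \<le> f x" and g: "\<And>x. 0 \<le> g x"
    and less: "outdist f W y2 * outdist g W y1 < outdist f W y1 * outdist g W y2"
  obtains x1 x2 r where "x1 \<noteq> x2" "0 < r" "0 < W x1 y1" "0 < W x2 y2"
    "outdist f W y1 * W x2 y1 \<le> r * (W x1 y1 * outdist g W y1)"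
    "r * (W x1 y2 * outdist g W y2) \<le> outdist f W y2 * W x2 y2"
proof -
  define a1 a2 b1 b2 where "a1 = outdist f W y1" "a2 = outdist f W y2"
    "b1 = outdist g W y1" "b2 = outdist g W y2"
  obtain x1 x2 where fg: "0 < f x1" "0 < g x2" and cross: "W x1 y2 * W x2 y1 < W x1 y1 * W x2 y2"
    and cross_sums: "W x1 y2 * W x2 y1 * (a1 * b2) \<le> W x1 y1 * W x2 y2 * (a2 * b1)"
    using exists_pair_cross_ratio_ge[OF W f g less] unfolding a1_a2_b1_b2_def by blast
  have "0 < W x1 y1 * W x2 y2"
    using cross W[of x1 y2] W[of x2 y1] by (meson mult_nonneg_nonneg order_le_less_trans)
  then have W11: "0 < W x1 y1" and W22: "0 < W x2 y2"
    using W[of x1 y1] W[of x2 y2] by (auto simp: zero_less_mult_iff)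
  have "x1 \<noteq> x2"
    using cross by (auto simp: mult.commute)
  have a2: "f x1 * W x1 y2 \<le> a2" and b1: "g x2 * W x2 y1 \<le> b1"
    unfolding a1_a2_b1_b2_def using W f g by (simp_all add: outdist_ge)
  have nonneg: "0 \<le> a1" "0 \<le> a2" "0 \<le> b1" "0 \<le> b2"
    unfolding a1_a2_b1_b2_def using W f g by (simp_all add: outdist_nonneg)
  obtain r where r: "0 < r" "a1 * W x2 y1 \<le> r * (W x1 y1 * b1)" "r * (W x1 y2 * b2) \<le> a2 * W x2 y2"
  proof (rule exists_scale_between)
    show "a1 * W x2 y1 * (W x1 y2 * b2) \<le> W x1 y1 * b1 * (a2 * W x2 y2)"
      using cross_sums by (simp add: ac_simps)
    show "a1 * W x2 y1 = 0" if "W x1 y1 * b1 = 0"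
    proof -
      have "W x2 y1 = 0"
        using that b1 W11 fg(2) W[of x2 y1] by (smt (verit) mult_pos_pos mult_eq_0_iff)
      then show ?thesis
        by simp
    qed
    show "0 < a2 * W x2 y2" if "0 < W x1 y2 * b2"
      using that a2 fg(1) W22 nonneg W[of x1 y2] by (smt (verit) mult_pos_pos zero_less_mult_iff)
  qed (use nonneg W in simp_all)
  from \<open>x1 \<noteq> x2\<close> r(1) W11 W22 r(2,3) show thesis
    unfolding a1_a2_b1_b2_def by (rule that)
qed

lemma exists_two_point_ratio_dominating:
  fixes W :: "'x::finite \<Rightarrow> 'y::finite \<Rightarrow> real" and f g :: "'x \<Rightarrow> real" and l :: real
  defines "P \<equiv> mixture l (outdist f W) (outdist g W)"
    and "Q \<equiv> mixture 1 (outdist f W) (outdist g W)"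
  assumes W: "\<And>x y. 0 \<le> W x y" and f: "\<And>x. 0 \<le> f x" and g: "\<And>x. 0 \<le> g x"
    and l: "1 \<le> l" and Q_pos: "0 < Q y1" "0 < Q y2"
    and less: "outdist f W y2 * outdist g W y1 < outdist f W y1 * outdist g W y2"
  obtains x1 x2 r where "x1 \<noteq> x2" "0 < r"
    "ereal (ln ((P y1 / Q y1) / (P y2 / Q y2)))
       \<le> DJinf (mixture l (\<lambda>y. r * W x1 y) (W x2)) (mixture 1 (\<lambda>y. r * W x1 y) (W x2))"
proof -
  obtain x1 x2 r where "x1 \<noteq> x2" "0 < r" "0 < W x1 y1" "0 < W x2 y2"
    and bound1: "outdist f W y1 * W x2 y1 \<le> r * (W x1 y1 * outdist g W y1)"
    and bound2: "r * (W x1 y2 * outdist g W y2) \<le> outdist f W y2 * W x2 y2"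
    using exists_two_point_ratio_bounds[OF W f g less] by blast
  define P' where "P' = mixture l (\<lambda>y. r * W x1 y) (W x2)"
  define Q' where "Q' = mixture 1 (\<lambda>y. r * W x1 y) (W x2)"
  have nonneg: "0 \<le> outdist f W y" "0 \<le> outdist g W y" "0 \<le> r * W x1 y" "0 \<le> W x2 y" for y
    using W f g \<open>0 < r\<close> by (simp_all add: outdist_nonneg)
  have Q'_pos: "0 < Q' y1" "0 < Q' y2"
    unfolding Q'_def mixture_def using nonneg \<open>0 < r\<close> \<open>0 < W x1 y1\<close> \<open>0 < W x2 y2\<close>
    by (auto intro: add_pos_nonneg add_nonneg_pos)
  have "Q y \<le> P y" "Q' y \<le> P' y" for y
    unfolding P_def Q_def P'_def Q'_def using l nonneg
      mixture_mono_weight[of l "outdist f W" y "outdist g W"]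
      mixture_mono_weight[of l "\<lambda>y. r * W x1 y" y "W x2"]
    by simp_all
  then have "0 < P y1" "0 < P y2" "0 < P' y1" "0 < P' y2"
    using Q_pos Q'_pos by (meson less_le_trans)+
  moreover have "P y1 / Q y1 \<le> P' y1 / Q' y1"
    using mixture_ratio_mono[OF l] nonneg Q_pos Q'_pos bound1
    unfolding P_def Q_def P'_def Q'_def mixture_def by (simp add: mult.assoc)
  moreover have "P' y2 / Q' y2 \<le> P y2 / Q y2"
    using mixture_ratio_mono[OF l] nonneg Q_pos Q'_pos bound2
    unfolding P_def Q_def P'_def Q'_def mixture_def by (simp add: mult.assoc)
  ultimately have "ereal (ln ((P y1 / Q y1) / (P y2 / Q y2))) \<le> DJinf P' Q'"
    using Q_pos Q'_pos by (intro DJinf_ge_ratio_bounds) simp_all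
  with \<open>x1 \<noteq> x2\<close> \<open>0 < r\<close> show thesis
    unfolding P'_def Q'_def by (rule that)
qed

lemma DJinf_two_point_mixture_nonneg:
  assumes "channel W" "1 \<le> l" "0 \<le> r"
  shows "0 \<le> DJinf (mixture l (\<lambda>y. r * W a y) (W b)) (mixture 1 (\<lambda>y. r * W a y) (W b))"
proof -
  obtain y where "0 < W b y"
    using assms(1) by (rule channel_ex_pos)
  then have "0 < mixture l (\<lambda>y. r * W a y) (W b) y" "0 < mixture 1 (\<lambda>y. r * W a y) (W b) y"
    unfolding mixture_def using assms channel_nonneg[OF assms(1)] by (auto intro: add_nonneg_pos)
  then show ?thesis
    by (rule DJinf_nonneg)
qed

lemma DJinf_outdist_mixture_le_two_point:
  fixes W :: "'x::finite \<Rightarrow> 'y::finite \<Rightarrow> real" and f g :: "'x \<Rightarrow> real"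
  assumes W: "channel W" and l: "1 \<le> l" and f: "\<And>x. 0 \<le> f x" and g: "\<And>x. 0 \<le> g x"
    and pos: "0 < mixture 1 (outdist f W) (outdist g W) z" and two: "\<exists>a b::'x. a \<noteq> b"
  obtains x1 x2 r where "x1 \<noteq> x2" "0 < r"
    "DJinf (mixture l (outdist f W) (outdist g W)) (mixture 1 (outdist f W) (outdist g W))
       \<le> DJinf (mixture l (\<lambda>y. r * W x1 y) (W x2)) (mixture 1 (\<lambda>y. r * W x1 y) (W x2))"
proof -
  define P where "P = mixture l (outdist f W) (outdist g W)"
  define Q where "Q = mixture 1 (outdist f W) (outdist g W)"
  have W_nonneg: "\<And>x y. 0 \<le> W x y"
    using W by (rule channel_nonneg)
  have nonneg: "0 \<le> outdist f W y" "0 \<le> outdist g W y" for y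
    using W_nonneg f g by (simp_all add: outdist_nonneg)
  have supp: "0 < P y \<longleftrightarrow> 0 < Q y" for y
    unfolding P_def Q_def by (intro mixture_pos_iff l nonneg)
  with pos have "0 < P z"
    unfolding Q_def by blast
  obtain y1 y2 where y: "0 < P y1" "0 < Q y1" "0 < P y2" "0 < Q y2"
    and DJ: "DJinf P Q = ereal (ln ((P y1 / Q y1) / (P y2 / Q y2)))"
    by (rule DJinf_attained[of P Q z, OF supp \<open>0 < P z\<close>])
  show thesis
  proof (cases "outdist f W y2 * outdist g W y1 < outdist f W y1 * outdist g W y2")
    case True
    obtain x1 x2 r where x: "x1 \<noteq> x2" "0 < r"
      and le: "ereal (ln ((P y1 / Q y1) / (P y2 / Q y2)))
         \<le> DJinf (mixture l (\<lambda>y. r * W x1 y) (W x2)) (mixture 1 (\<lambda>y. r * W x1 y) (W x2))"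
      using exists_two_point_ratio_dominating[where W = W and f = f and g = g and l = l,
          OF W_nonneg f g l, folded P_def Q_def, OF y(2,4) True]
      by blast
    from le have "DJinf P Q \<le> DJinf (mixture l (\<lambda>y. r * W x1 y) (W x2)) (mixture 1 (\<lambda>y. r * W x1 y) (W x2))"
      unfolding DJ .
    with x show thesis
      unfolding P_def Q_def by (rule that)
  next
    case False
    (* Then the output ratio is constant on the support, and any two-point pair will do. *)
    then have "P y1 / Q y1 \<le> P y2 / Q y2"
      using mixture_ratio_mono[OF l] nonneg y(2,4) unfolding P_def Q_def mixture_def by simp
    then have "(P y1 / Q y1) / (P y2 / Q y2) \<le> 1"
      using y by (subst divide_le_eq_1_pos) simp_all
    then have "DJinf P Q \<le> 0"
      unfolding DJ using y by simp
    obtain a b :: 'x where "a \<noteq> b"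
      using two by blast
    with \<open>DJinf P Q \<le> 0\<close> DJinf_two_point_mixture_nonneg[OF W l, of 1 a b] show thesis
      unfolding P_def Q_def by (intro that[of a b 1]) auto
  qed
qed

lemma DJinf_pos_imp_two_points:
  fixes P0 P1 :: "'x::finite \<Rightarrow> real"
  assumes "pdist P0" "pdist P1" "0 < DJinf P0 P1"
  shows "\<exists>a b::'x. a \<noteq> b"
proof (rule ccontr)
  assume "\<not> (\<exists>a b::'x. a \<noteq> b)"
  then have U: "UNIV = {x}" for x :: 'x
    by auto
  have one: "P x = 1" if "pdist P" for P :: "'x \<Rightarrow> real" and x
    using that unfolding pdist_def U[of x] by simp
  have "P0 = P1"
    using one[OF assms(1)] one[OF assms(2)] by auto
  moreover have "0 < P0 x" for x
    using one[OF assms(1)] by simp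
  ultimately have "DJinf P0 P1 = 0"
    using DJinf_self by metis
  with assms(3) show False
    by simp
qed

lemma ratio_bounds_mixture_decomposition:
  fixes P Q :: "'a \<Rightarrow> real" and a b :: real
  assumes ab: "0 < b" "1 < a * b" and bounds: "\<And>x. P x \<le> a * Q x" "\<And>x. Q x \<le> b * P x"
  obtains f g where "\<And>x. 0 \<le> f x" "\<And>x. 0 \<le> g x"
    "P = (\<lambda>x. 1 / b * mixture (a * b) f g x)" "Q = mixture 1 f g"
proof -
  define l where "l = a * b"
  define f where "f x = (b * P x - Q x) / (l - 1)" for x
  define g where "g x = (l * Q x - b * P x) / (l - 1)" for x
  have f': "(l - 1) * f x = b * P x - Q x" and g': "(l - 1) * g x = l * Q x - b * P x" for x
    using ab by (simp_all add: f_def g_def l_def)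
  have "b * P x \<le> l * Q x" for x
    using mult_left_mono[OF bounds(1) less_imp_le[OF ab(1)]] by (simp add: l_def ac_simps)
  then have "0 \<le> f x" "0 \<le> g x" for x
    using bounds(2)[of x] ab unfolding f_def g_def l_def by simp_all
  moreover have "l * f x + g x = b * P x" "f x + g x = Q x" for x
  proof -
    have "(l - 1) * (l * f x + g x) = l * ((l - 1) * f x) + (l - 1) * g x"
      "(l - 1) * (f x + g x) = (l - 1) * f x + (l - 1) * g x"
      by (simp_all add: algebra_simps)
    then have "(l - 1) * (l * f x + g x) = (l - 1) * (b * P x)" "(l - 1) * (f x + g x) = (l - 1) * Q x"
      unfolding f' g' by (simp_all add: algebra_simps)
    then show "l * f x + g x = b * P x" "f x + g x = Q x"
      using ab by (simp_all add: l_def)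
  qed
  then have "P = (\<lambda>x. 1 / b * mixture l f g x)" "Q = mixture 1 f g"
    unfolding mixture_def using ab(1) by auto
  ultimately show thesis
    unfolding l_def by (rule that)
qed

lemma pdist_pair_mixture_decomposition:
  assumes "pdist P0" "pdist P1" "0 < DJinf P0 P1" "DJinf P0 P1 < \<infinity>"
  obtains l c f g where "1 < l" "DJinf P0 P1 = ereal (ln l)" "0 < c"
    "\<And>x. 0 \<le> f x" "\<And>x. 0 \<le> g x" "P0 = (\<lambda>x. c * mixture l f g x)" "P1 = mixture 1 f g"
proof -
  have nonneg: "0 \<le> P0 x" "0 \<le> P1 x" for x
    using assms(1,2) unfolding pdist_def by auto
  obtain z0 where "0 < P0 z0"
    using assms(1) by (rule pdist_ex_pos)
  obtain z1 where "0 < P1 z1"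
    using assms(2) by (rule pdist_ex_pos)
  have fin: "Dinf P0 P1 \<noteq> \<infinity>" "Dinf P1 P0 \<noteq> \<infinity>"
    using assms(4) Dinf_neq_minf[of P0 P1] Dinf_neq_minf[of P1 P0] unfolding DJinf_def by auto
  obtain M0 where M0: "0 < M0" "Dinf P0 P1 = ereal (ln M0)" "\<And>x. P0 x \<le> M0 * P1 x"
    using Dinf_finite_bound[OF nonneg(2) \<open>0 < P0 z0\<close> fin(1)] by blast
  obtain M1 where M1: "0 < M1" "Dinf P1 P0 = ereal (ln M1)" "\<And>x. P1 x \<le> M1 * P0 x"
    using Dinf_finite_bound[OF nonneg(1) \<open>0 < P1 z1\<close> fin(2)] by blast
  have DJ: "DJinf P0 P1 = ereal (ln (M0 * M1))"
    unfolding DJinf_def M0(2) M1(2) using M0(1) M1(1) by (simp add: ln_mult)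
  with assms(3) have "1 < M0 * M1"
    using M0(1) M1(1) by simp
  obtain f g where fg: "\<And>x. 0 \<le> f x" "\<And>x. 0 \<le> g x"
    and P: "P0 = (\<lambda>x. 1 / M1 * mixture (M0 * M1) f g x)" "P1 = mixture 1 f g"
    using ratio_bounds_mixture_decomposition[where P = P0 and Q = P1 and a = M0 and b = M1,
        OF M1(1) \<open>1 < M0 * M1\<close> M0(3) M1(3)]
    by blast
  have "0 < 1 / M1"
    using M1(1) by simp
  from \<open>1 < M0 * M1\<close> DJ this fg P show thesis
    by (rule that)
qed

lemma exists_two_point_pair_dominating:
  fixes W :: "'x::finite \<Rightarrow> 'y::finite \<Rightarrow> real" and P0 P1 :: "'x \<Rightarrow> real"
  assumes W: "channel W" and P: "pdist P0" "pdist P1"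
    and DJ: "0 < DJinf P0 P1" "DJinf P0 P1 < \<infinity>"
  obtains P0' P1' where "binary_support P0' P1'" "pdist P0'" "pdist P1'"
    "DJinf P0' P1' = DJinf P0 P1"
    "DJinf (outdist P0 W) (outdist P1 W) \<le> DJinf (outdist P0' W) (outdist P1' W)"
proof -
  obtain l c f g where l: "1 < l" and DJ_eq: "DJinf P0 P1 = ereal (ln l)" and "0 < c"
    and f: "\<And>x. 0 \<le> f x" and g: "\<And>x. 0 \<le> g x"
    and P0: "P0 = (\<lambda>x. c * mixture l f g x)" and P1: "P1 = mixture 1 f g"
    using pdist_pair_mixture_decomposition[OF P DJ] by blast
  define Q0 where "Q0 = mixture l (outdist f W) (outdist g W)"
  define Q1 where "Q1 = mixture 1 (outdist f W) (outdist g W)"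
  have "0 \<le> outdist f W y" "0 \<le> outdist g W y" for y
    using f g channel_nonneg[OF W] by (simp_all add: outdist_nonneg)
  then have Q: "0 \<le> Q1 y" "Q1 y \<le> Q0 y" for y
    unfolding Q0_def Q1_def mixture_def using less_imp_le[OF l]
    by (auto intro: mult_right_mono[of 1 l, simplified])
  have out: "outdist P0 W = (\<lambda>y. c * Q0 y)" "outdist P1 W = Q1"
    unfolding P0 P1 Q0_def Q1_def by (simp_all add: outdist_scale outdist_mixture)
  obtain z where "0 < Q1 z"
    using pdist_ex_pos[OF pdist_outdist[OF W P(2)]] unfolding out by blast
  have "DJinf (outdist P0 W) (outdist P1 W) = DJinf Q0 Q1"
    unfolding out using DJinf_scale[of c 1 Q0 Q1 z z] \<open>0 < c\<close> \<open>0 < Q1 z\<close> Q(1) Q(2)[of z]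
    by (simp add: order_trans[OF Q(1,2)])
  moreover obtain x1 x2 r where "x1 \<noteq> x2" "0 < r"
    "DJinf Q0 Q1 \<le> DJinf (mixture l (\<lambda>y. r * W x1 y) (W x2)) (mixture 1 (\<lambda>y. r * W x1 y) (W x2))"
    using DJinf_outdist_mixture_le_two_point[OF W less_imp_le[OF l] f g \<open>0 < Q1 z\<close>[unfolded Q1_def]
        DJinf_pos_imp_two_points[OF P DJ(1)]]
    unfolding Q0_def Q1_def by blast
  ultimately show thesis
    using l DJ_eq W
    by (intro that[of "two_point x1 x2 (l * r)" "two_point x1 x2 r"])
      (simp_all add: binary_support_two_point pdist_two_point DJinf_two_point DJinf_outdist_two_point)
qed

lemma eta_J_le_eta_J_on:
  assumes "\<And>P0 P1. pdist P0 \<Longrightarrow> pdist P1 \<Longrightarrow> 0 < DJinf P0 P1 \<Longrightarrow> DJinf P0 P1 < \<infinity> \<Longrightarrow>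
      \<exists>P0' P1'. S P0' P1' \<and> pdist P0' \<and> pdist P1' \<and> DJinf P0' P1' = DJinf P0 P1 \<and>
        DJinf (outdist P0 W) (outdist P1 W) \<le> DJinf (outdist P0' W) (outdist P1' W)"
  shows "eta_J W \<le> eta_J_on S W"
  apply (unfold eta_J_def eta_J_on_def)
  apply (rule Sup_mono, clarsimp)
  subgoal premises P for P0 P1
  proof -
    have "DJinf P0 P1 < \<infinity>"
      using P(4) by (simp add: less_top[symmetric])
    then obtain P0' P1' where P': "S P0' P1'" "pdist P0'" "pdist P1'" "DJinf P0' P1' = DJinf P0 P1"
      and le: "DJinf (outdist P0 W) (outdist P1 W) \<le> DJinf (outdist P0' W) (outdist P1' W)"
      using assms[OF P(1-3)] by blast
    have "DJinf (outdist P0 W) (outdist P1 W) / DJinf P0 P1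
        \<le> DJinf (outdist P0' W) (outdist P1' W) / DJinf P0' P1'"
      unfolding P'(4) using le P(3) by (rule ereal_divide_right_mono)
    with P P' show ?thesis
      by (metis (mono_tags, lifting))
  qed
  done

lemma eta_J_on_mono:
  assumes "\<And>P0 P1. S P0 P1 \<Longrightarrow> S' P0 P1"
  shows "eta_J_on S W \<le> eta_J_on S' W"
  unfolding eta_J_on_def using assms by (intro Sup_subset_mono) blast
theorem theorem4p3:
  fixes W :: "'x::finite \<Rightarrow> 'y::finite \<Rightarrow> real"
  assumes "channel W"
  shows "eta_J W = eta_J_on binary_support W"
proof (rule antisym)
  show "eta_J W \<le> eta_J_on binary_support W"
    using exists_two_point_pair_dominating[OF assms] by (intro eta_J_le_eta_J_on) blast
  show "eta_J_on binary_support W \<le> eta_J W"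
    unfolding eta_J_def by (rule eta_J_on_mono) simp
qed

end
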